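(* Let $a,b,c$ be positive integers and $r=[2a,2b,-2c]$. Then all zeros of $\Delta_{K(r)}(t)$ are real if and only if $a\ge c$.
   Context: For a finite sequence $r=[2a_1,2a_2,\dots,2a_n]$ of nonzero even integers, $K(r)$ denotes the 2-bridge knot or link whose associated rational number has the even continued fraction expansion $1/(2a_1-1/(2a_2-\cdots-1/(2a_n)))$ ($K(r)$ is a knot if $n$ is even and a 2-component link if $n$ is odd). Let $M(r)$ be the $n\times n$ integer matrix whose $(k,k)$-entry is $a_k$ ($1\le k\le n$), whose $(k,k+1)$-entry is $1$ ($1\le k\le n-1$), and whose other entries are $0$; it is a Seifert matrix of $K(r)$, and $\Delta_{K(r)}(t)=\det(tM(r)-M(r)^T)$ is the (reduced) Alexander polynomial of $K(r)$ (well defined up to sign). *)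

theory Defs
  imports "Jordan_Normal_Form.Determinant" "HOL-Computational_Algebra.Polynomial" Complex_Main
begin

definition seifert_matrix :: "int list \<Rightarrow> int mat" where
  "seifert_matrix r = mat (length r) (length r)
     (\<lambda>(i,j). if i = j then (r ! i) div 2 else if j = i + 1 then 1 else 0)"

text \<open>The Alexander polynomial det(t M - M^T) as an integer polynomial in t.\<close>
definition alexander_poly :: "int list \<Rightarrow> int poly" where
  "alexander_poly r = (let M = seifert_matrix r; n = length r in
     det (mat n n (\<lambda>(i,j). [: - (M $$ (j,i)), M $$ (i,j) :])))"

definition all_zeros_real :: "int poly \<Rightarrow> bool" where
  "all_zeros_real p \<longleftrightarrow> (\<forall>z::complex. poly (map_poly of_int p) z = 0 \<longrightarrow> Im z = 0)"

end

theory Submission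
  imports Defs "HOL-Library.Quadratic_Discriminant"
begin

text \<open>For r = [2x, 2y, 2z] the Alexander polynomial is (t - 1)(xyz (t - 1)^2 + (x + z) t).
  For x = a, y = b, z = -c the quadratic factor is -k t^2 + m t - k with k = abc and
  m = 2k + a - c. Its zeros are real iff its discriminant m^2 - 4k^2 = (a - c)(4k + a - c)
  is nonnegative, and the second factor is positive because k \<ge> c.\<close>

lemma det_dim_2:
  assumes "(A :: 'a :: comm_ring_1 mat) \<in> carrier_mat 2 2"
  shows "det A = A$$(0,0) * A$$(1,1) - A$$(0,1) * A$$(1,0)"
proof -
  have "det A = (\<Sum>j<2. A $$ (0,j) * cofactor A 0 j)"
    by (rule laplace_expansion_row[OF assms]) simp
  also have "\<dots> = A$$(0,0) * A$$(1,1) - A$$(0,1) * A$$(1,0)"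
    using assms by (simp add: numeral_2_eq_2 cofactor_def det_single mat_delete_def)
  finally show ?thesis .
qed

lemma det_dim_3:
  assumes A: "(A :: 'a :: comm_ring_1 mat) \<in> carrier_mat 3 3"
  shows "det A = A$$(0,0) * (A$$(1,1) * A$$(2,2) - A$$(1,2) * A$$(2,1))
     - A$$(0,1) * (A$$(1,0) * A$$(2,2) - A$$(1,2) * A$$(2,0))
     + A$$(0,2) * (A$$(1,0) * A$$(2,1) - A$$(1,1) * A$$(2,0))"
proof -
  have minor_2x2: "mat_delete A 0 j \<in> carrier_mat 2 2" for j
    using mat_delete_carrier[OF A] by simp
  have expansion: "det A = A $$ (0,0) * cofactor A 0 0 + A $$ (0,1) * cofactor A 0 1
      + A $$ (0,2) * cofactor A 0 2"
    by (subst laplace_expansion_row[OF A, of 0]) (simp_all add: numeral_3_eq_3 numeral_2_eq_2)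
  have cofactors: "cofactor A 0 0 = A$$(1,1) * A$$(2,2) - A$$(1,2) * A$$(2,1)"
    "cofactor A 0 1 = A$$(1,2) * A$$(2,0) - A$$(1,0) * A$$(2,2)"
    "cofactor A 0 2 = A$$(1,0) * A$$(2,1) - A$$(1,1) * A$$(2,0)"
    unfolding cofactor_def det_dim_2[OF minor_2x2] using A by (simp_all add: mat_delete_def numeral_2_eq_2)
  show ?thesis
    unfolding expansion cofactors by (simp add: algebra_simps)
qed

lemma alexander_poly_length_3:
  "alexander_poly [2*x, 2*y, 2*z] =
     [:- (x*y*z), 3*(x*y*z) - (x + z), (x + z) - 3*(x*y*z), x*y*z:]"
  unfolding alexander_poly_def Let_def
  by (subst det_dim_3) (auto intro!: poly_ext simp: seifert_matrix_def numeral_3_eq_3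
      numeral_2_eq_2 algebra_simps)

lemma poly_alexander_poly_length_3:
  "poly (map_poly of_int (alexander_poly [2*x, 2*y, 2*z])) (w :: 'a :: comm_ring_1) =
     (w - 1) * (of_int (x*y*z) * (w - 1)\<^sup>2 + of_int (x + z) * w)"
  unfolding alexander_poly_length_3 by (simp add: map_poly_pCons algebra_simps power2_eq_square)

lemma Im_eq_0_if_square_nonneg_real:
  assumes "u\<^sup>2 = complex_of_real d" and "0 \<le> d"
  shows "Im u = 0"
proof (rule ccontr)
  assume "Im u \<noteq> 0"
  moreover have "Re u * Im u = 0" and "(Re u)\<^sup>2 - (Im u)\<^sup>2 = d"
    using arg_cong[OF assms(1), of Im] arg_cong[OF assms(1), of Re]
    by (auto simp: power2_eq_square)
  ultimately have "d = - (Im u)\<^sup>2" and "(Im u)\<^sup>2 > 0"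
    by auto
  with \<open>0 \<le> d\<close> show False
    by linarith
qed

lemma complex_complete_square:
  fixes a b c :: real
  assumes "a \<noteq> 0"
  shows "of_real a * z\<^sup>2 + of_real b * z + of_real c = 0
    \<longleftrightarrow> (2 * of_real a * z + of_real b)\<^sup>2 = complex_of_real (discrim a b c)"
proof -
  have "(2 * of_real a * z + of_real b)\<^sup>2 - complex_of_real (discrim a b c) =
      4 * of_real a * (of_real a * z\<^sup>2 + of_real b * z + of_real c)"
    by (simp add: discrim_def power2_eq_square algebra_simps)
  then show ?thesis
    using assms by (metis eq_iff_diff_eq_0 mult_eq_0_iff of_real_eq_0_iff zero_neq_numeral)
qed

lemma complex_quadratic_roots_real_iff:
  fixes a b c :: real
  assumes "a \<noteq> 0"
  shows "(\<forall>z. of_real a * z\<^sup>2 + of_real b * z + of_real c = 0 \<longrightarrow> Im z = 0)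
    \<longleftrightarrow> 0 \<le> discrim a b c"
proof
  assume real_roots: "\<forall>z. of_real a * z\<^sup>2 + of_real b * z + of_real c = 0 \<longrightarrow> Im z = 0"
  show "0 \<le> discrim a b c"
  proof (rule ccontr)
    assume "\<not> 0 \<le> discrim a b c"
    define s where "s = sqrt (- discrim a b c)"
    have "s > 0" and s2: "s\<^sup>2 = - discrim a b c"
      using \<open>\<not> 0 \<le> discrim a b c\<close> by (simp_all add: s_def)
    define z where "z = (\<i> * of_real s - of_real b) / (2 * of_real a)"
    have "2 * of_real a * z + of_real b = \<i> * of_real s"
      using assms by (simp add: z_def)
    moreover have "(\<i> * complex_of_real s)\<^sup>2 = complex_of_real (discrim a b c)"
      using s2 by (simp add: power_mult_distrib flip: of_real_power)
    ultimately have "(2 * of_real a * z + of_real b)\<^sup>2 = complex_of_real (discrim a b c)"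
      by simp
    then have "of_real a * z\<^sup>2 + of_real b * z + of_real c = 0"
      using complex_complete_square[OF assms] by blast
    moreover have "Im z \<noteq> 0"
      using assms \<open>s > 0\<close> by (simp add: z_def)
    ultimately show False
      using real_roots by blast
  qed
next
  assume "0 \<le> discrim a b c"
  show "\<forall>z. of_real a * z\<^sup>2 + of_real b * z + of_real c = 0 \<longrightarrow> Im z = 0"
  proof (intro allI impI)
    fix z :: complex
    assume "of_real a * z\<^sup>2 + of_real b * z + of_real c = 0"
    then have "(2 * of_real a * z + of_real b)\<^sup>2 = complex_of_real (discrim a b c)"
      using complex_complete_square[OF assms] by blast
    then have "Im (2 * of_real a * z + of_real b) = 0"
      using \<open>0 \<le> discrim a b c\<close> by (rule Im_eq_0_if_square_nonneg_real)
    then show "Im z = 0"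
      using assms by simp
  qed
qed

theorem proposition8p5:
  fixes a b c :: int
  assumes "a > 0" and "b > 0" and "c > 0"
  shows "all_zeros_real (alexander_poly [2*a, 2*b, -2*c]) \<longleftrightarrow> a \<ge> c"
proof -
  define k where "k = real_of_int (a*b*c)"
  define m where "m = 2 * k + a - c"
  have "c \<le> a*b*c"
    using assms by (simp add: mult_le_cancel_right1 int_one_le_iff_zero_less)
  then have "k \<ge> c"
    by (simp only: k_def of_int_le_iff)
  have "k > 0"
    using assms by (simp add: k_def)
  have factorization: "poly (map_poly of_int (alexander_poly [2*a, 2*b, -2*c])) w =
      (w - 1) * (of_real (- k) * w\<^sup>2 + of_real m * w + of_real (- k))" for w :: complex
    using poly_alexander_poly_length_3[of a b "-c" w]
    by (simp add: k_def m_def power2_eq_square algebra_simps)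
  have "all_zeros_real (alexander_poly [2*a, 2*b, -2*c]) \<longleftrightarrow>
      (\<forall>w. of_real (- k) * w\<^sup>2 + of_real m * w + of_real (- k) = 0 \<longrightarrow> Im w = 0)"
    unfolding all_zeros_real_def factorization by auto
  also have "\<dots> \<longleftrightarrow> 0 \<le> discrim (- k) m (- k)"
    using \<open>k > 0\<close> by (intro complex_quadratic_roots_real_iff) simp
  also have "discrim (- k) m (- k) = (a - c) * (4 * k + a - c)"
    by (simp add: discrim_def m_def power2_eq_square algebra_simps)
  also have "0 \<le> (a - c) * (4 * k + a - c) \<longleftrightarrow> a \<ge> c"
  proof -
    have "4 * k + a - c > 0"
      using \<open>k \<ge> c\<close> assms by linarith
    then show ?thesis
      by (simp add: zero_le_mult_iff)
  qed
  finally show ?thesis .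
qed

end
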